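(* Let $\mathfrak n$ be the $7$-dimensional real Lie algebra with basis $\{u_1,u_2,z,v_1,v_2,e_1,e_2\}$ whose only nonzero brackets (up to antisymmetry) are $[e_1,e_2]=z$, $[v_1,v_2]=z$, $[e_1,v_1]=u_1$, $[e_2,v_1]=u_2$, $[e_1,v_2]=u_2$, $[e_2,v_2]=-u_1$, and let $N$ be the corresponding simply connected Lie group with the left-invariant pseudo-Riemannian metric whose only nonzero inner products on basis vectors are $\langle u_i,v_j\rangle=\delta_{ij}$, $\langle z,z\rangle=\varepsilon$, $\langle e_a,e_a\rangle=\bar\varepsilon_a$ ($a=1,2$), where $\varepsilon,\bar\varepsilon_1,\bar\varepsilon_2\in\{1,-1\}$. Then this metric is not a nilsoliton.
   Context: $\mathrm{Ric}$ denotes the Ricci operator of the left-invariant metric ($\langle\mathrm{Ric}\,x,y\rangle=\varrho(x,y)$, $\varrho$ the Ricci tensor). The metric is a nilsoliton if $\mathrm{Ric}=c\cdot\mathrm{Id}+D$ for some $c\in\mathbb R$ and some derivation $D$ of $\mathfrak n$. *)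

theory Defs
  imports "HOL-Analysis.Analysis"
begin

text \<open>A Lie algebra with basis indexed by a finite type 'i is given by structure constants
  C i j k (coefficient of the k-th basis vector in the bracket of the i-th and j-th);
  a (left-invariant) metric by its Gram matrix g i j on the basis.\<close>

definition lbr :: "('i::finite \<Rightarrow> 'i \<Rightarrow> 'i \<Rightarrow> real) \<Rightarrow> real^'i \<Rightarrow> real^'i \<Rightarrow> real^'i" where
  "lbr C x y = (\<chi> k. \<Sum>i\<in>UNIV. \<Sum>j\<in>UNIV. x$i * y$j * C i j k)"

definition ip :: "('i::finite \<Rightarrow> 'i \<Rightarrow> real) \<Rightarrow> real^'i \<Rightarrow> real^'i \<Rightarrow> real" where
  "ip g x y = (\<Sum>i\<in>UNIV. \<Sum>j\<in>UNIV. x$i * y$j * g i j)"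

text \<open>Levi-Civita connection of the left-invariant metric (Koszul formula).\<close>
definition LC :: "('i::finite \<Rightarrow> 'i \<Rightarrow> real) \<Rightarrow> ('i \<Rightarrow> 'i \<Rightarrow> 'i \<Rightarrow> real)
    \<Rightarrow> real^'i \<Rightarrow> real^'i \<Rightarrow> real^'i" where
  "LC g C x y = (THE w. \<forall>z. ip g w z =
      (ip g (lbr C x y) z - ip g (lbr C y z) x + ip g (lbr C z x) y) / 2)"

definition curv :: "('i::finite \<Rightarrow> 'i \<Rightarrow> real) \<Rightarrow> ('i \<Rightarrow> 'i \<Rightarrow> 'i \<Rightarrow> real)
    \<Rightarrow> real^'i \<Rightarrow> real^'i \<Rightarrow> real^'i \<Rightarrow> real^'i" where
  "curv g C x y w = LC g C x (LC g C y w) - LC g C y (LC g C x w) - LC g C (lbr C x y) w"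

definition ricci :: "('i::finite \<Rightarrow> 'i \<Rightarrow> real) \<Rightarrow> ('i \<Rightarrow> 'i \<Rightarrow> 'i \<Rightarrow> real)
    \<Rightarrow> real^'i \<Rightarrow> real^'i \<Rightarrow> real" where
  "ricci g C x y = (\<Sum>i\<in>UNIV. curv g C (axis i 1) x y $ i)"

definition Ric :: "('i::finite \<Rightarrow> 'i \<Rightarrow> real) \<Rightarrow> ('i \<Rightarrow> 'i \<Rightarrow> 'i \<Rightarrow> real)
    \<Rightarrow> real^'i \<Rightarrow> real^'i" where
  "Ric g C x = (THE w. \<forall>y. ip g w y = ricci g C x y)"

definition is_derivation :: "('i::finite \<Rightarrow> 'i \<Rightarrow> 'i \<Rightarrow> real) \<Rightarrow> (real^'i \<Rightarrow> real^'i) \<Rightarrow> bool" where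
  "is_derivation C D \<longleftrightarrow> linear D \<and>
     (\<forall>x y. D (lbr C x y) = lbr C (D x) y + lbr C x (D y))"

definition nilsoliton :: "('i::finite \<Rightarrow> 'i \<Rightarrow> real) \<Rightarrow> ('i \<Rightarrow> 'i \<Rightarrow> 'i \<Rightarrow> real) \<Rightarrow> bool" where
  "nilsoliton g C \<longleftrightarrow> (\<exists>c D. is_derivation C D \<and> (\<forall>x. Ric g C x = c *\<^sub>R x + D x))"

datatype B = U1 | U2 | Zb | V1 | V2 | E1 | E2

lemma UNIV_B: "(UNIV :: B set) = {U1, U2, Zb, V1, V2, E1, E2}"
  by (auto intro: B.exhaust)

instance B :: finite
  by standard (simp add: UNIV_B)

fun posbr :: "B \<Rightarrow> B \<Rightarrow> B \<Rightarrow> real" where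
  "posbr E1 E2 Zb = 1"
| "posbr V1 V2 Zb = 1"
| "posbr E1 V1 U1 = 1"
| "posbr E2 V1 U2 = 1"
| "posbr E1 V2 U2 = 1"
| "posbr E2 V2 U1 = -1"
| "posbr _ _ _ = 0"

definition Cn :: "B \<Rightarrow> B \<Rightarrow> B \<Rightarrow> real" where
  "Cn i j k = posbr i j k - posbr j i k"

fun gN :: "real \<Rightarrow> real \<Rightarrow> real \<Rightarrow> B \<Rightarrow> B \<Rightarrow> real" where
  "gN \<epsilon> a b U1 V1 = 1"
| "gN \<epsilon> a b V1 U1 = 1"
| "gN \<epsilon> a b U2 V2 = 1"
| "gN \<epsilon> a b V2 U2 = 1"
| "gN \<epsilon> a b Zb Zb = \<epsilon>"
| "gN \<epsilon> a b E1 E1 = a"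
| "gN \<epsilon> a b E2 E2 = b"
| "gN \<epsilon> a b _ _ = 0"

end

theory Submission imports Defs begin

text \<open>Suppose \<open>Ric = c Id + D\<close> with \<open>D\<close> a derivation.  Comparing \<open>z\<close>-coefficients in
  \<open>D[v\<^sub>1,v\<^sub>2] = D z = D[e\<^sub>1,e\<^sub>2]\<close> gives \<open>D\<^sub>z\<^sub>z = D\<^sub>v\<^sub>1\<^sub>v\<^sub>1 + D\<^sub>v\<^sub>2\<^sub>v\<^sub>2 = D\<^sub>e\<^sub>1\<^sub>e\<^sub>1 + D\<^sub>e\<^sub>2\<^sub>e\<^sub>2\<close>, and since
  \<open>D = Ric - c Id\<close> the same relation \<open>Ric\<^sub>v\<^sub>1\<^sub>v\<^sub>1 + Ric\<^sub>v\<^sub>2\<^sub>v\<^sub>2 = Ric\<^sub>e\<^sub>1\<^sub>e\<^sub>1 + Ric\<^sub>e\<^sub>2\<^sub>e\<^sub>2\<close> holds for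
  the diagonal entries of the Ricci operator.  Computing the Christoffel symbols from the Koszul
  formula, the left-hand side is \<open>0\<close> while the right-hand side is \<open>-\<epsilon> \<epsilon>\<^sub>1 \<epsilon>\<^sub>2 \<noteq> 0\<close>.\<close>

lemma linear_sum_axis:
  fixes f :: "real^'i::finite \<Rightarrow> real"
  assumes "linear f"
  shows "f z = (\<Sum>m\<in>UNIV. z$m * f (axis m 1))"
proof -
  have "f z = f (\<Sum>i\<in>UNIV. z$i *\<^sub>R axis i 1)"
    using basis_expansion[of z] by (simp add: scalar_mult_eq_scaleR)
  also have "\<dots> = (\<Sum>i\<in>UNIV. z$i * f (axis i 1))"
    by (simp add: linear_sum[OF assms] linear_scale[OF assms])
  finally show ?thesis .
qed

lemma sum_axis_weighted:
  "(\<Sum>j\<in>UNIV. f j * (axis k 1 :: real^'i::finite)$j * h j) = f k * h k"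
proof -
  have "(\<Sum>j\<in>UNIV. f j * (axis k 1 :: real^'i)$j * h j) = (\<Sum>j\<in>UNIV. if j = k then f j * h j else 0)"
    by (rule sum.cong) (auto simp: axis_def)
  then show ?thesis by simp
qed

lemma sum_axis: "(\<Sum>j\<in>UNIV. (axis k 1 :: real^'i::finite)$j * h j) = h k"
  using sum_axis_weighted[where f="\<lambda>_. 1"] by simp

lemma sum_delta_right: "(\<Sum>m\<in>(UNIV::'i::finite set). a m * (if m = k then 1 else 0)) = (a k :: real)"
  using sum_axis[of k a] by (simp add: axis_def mult.commute)

lemma ip_add_left: "ip g (x + y) z = ip g x z + ip g y z"
  unfolding ip_def by (simp add: algebra_simps sum.distrib)
lemma ip_add_right: "ip g z (x + y) = ip g z x + ip g z y"
  unfolding ip_def by (simp add: algebra_simps sum.distrib)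
lemma ip_scaleR_left: "ip g (c *\<^sub>R x) z = c * ip g x z"
  unfolding ip_def by (simp add: algebra_simps sum_distrib_left)
lemma ip_scaleR_right: "ip g z (c *\<^sub>R x) = c * ip g z x"
  unfolding ip_def by (simp add: algebra_simps sum_distrib_left)
lemma lbr_add_left: "lbr C (x + y) z = lbr C x z + lbr C y z"
  unfolding lbr_def by (simp add: vec_eq_iff algebra_simps sum.distrib)
lemma lbr_add_right: "lbr C z (x + y) = lbr C z x + lbr C z y"
  unfolding lbr_def by (simp add: vec_eq_iff algebra_simps sum.distrib)
lemma lbr_scaleR_left: "lbr C (c *\<^sub>R x) z = c *\<^sub>R lbr C x z"
  unfolding lbr_def by (simp add: vec_eq_iff algebra_simps sum_distrib_left)
lemma lbr_scaleR_right: "lbr C z (c *\<^sub>R x) = c *\<^sub>R lbr C z x"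
  unfolding lbr_def by (simp add: vec_eq_iff algebra_simps sum_distrib_left)

lemmas ip_lbr_bilinear =
  ip_add_left ip_add_right ip_scaleR_left ip_scaleR_right
  lbr_add_left lbr_add_right lbr_scaleR_left lbr_scaleR_right

lemma ip_axis_right: "ip g u (axis k 1) = (\<Sum>i\<in>UNIV. u$i * g i k)"
  unfolding ip_def by (simp add: sum_axis_weighted)

lemma lbr_axis_axis: "lbr C (axis a 1) (axis b 1) = (\<chi> k. C a b k)"
  unfolding lbr_def by (simp add: vec_eq_iff mult.assoc sum_distrib_left[symmetric] sum_axis)

lemma lbr_axis_left_component: "lbr C (axis a 1) u $ k = (\<Sum>j\<in>UNIV. u$j * C a j k)"
  unfolding lbr_def vec_lambda_beta by (simp add: mult.assoc sum_distrib_left[symmetric] sum_axis)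

lemma lbr_axis_right_component: "lbr C u (axis b 1) $ k = (\<Sum>i\<in>UNIV. u$i * C i b k)"
  unfolding lbr_def vec_lambda_beta by (simp only: sum_axis_weighted)

lemma derivation_axis_component:
  assumes "is_derivation C D" and "lbr C (axis a 1) (axis b 1) = axis c 1"
  shows "D (axis c 1) $ c = (\<Sum>i\<in>UNIV. D (axis a 1) $ i * C i b c) + (\<Sum>j\<in>UNIV. D (axis b 1) $ j * C a j c)"
proof -
  have "D (lbr C (axis a 1) (axis b 1)) = lbr C (D (axis a 1)) (axis b 1) + lbr C (axis a 1) (D (axis b 1))"
    using assms(1) unfolding is_derivation_def by blast
  then show ?thesis
    using assms(2) by (simp add: lbr_axis_left_component lbr_axis_right_component)
qed

definition koszul :: "('i::finite \<Rightarrow> 'i \<Rightarrow> real) \<Rightarrow> ('i \<Rightarrow> 'i \<Rightarrow> 'i \<Rightarrow> real)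
    \<Rightarrow> real^'i \<Rightarrow> real^'i \<Rightarrow> real^'i \<Rightarrow> real" where
  "koszul g C x y z = (ip g (lbr C x y) z - ip g (lbr C y z) x + ip g (lbr C z x) y) / 2"

lemma linear_koszul_1: "linear (\<lambda>x. koszul g C x y z)"
  by (rule linearI) (simp_all add: koszul_def ip_lbr_bilinear field_simps)
lemma linear_koszul_2: "linear (\<lambda>y. koszul g C x y z)"
  by (rule linearI) (simp_all add: koszul_def ip_lbr_bilinear field_simps)
lemma linear_koszul_3: "linear (koszul g C x y)"
  by (rule linearI) (simp_all add: koszul_def ip_lbr_bilinear field_simps)

definition christoffel :: "('i::finite \<Rightarrow> 'i \<Rightarrow> real) \<Rightarrow> ('i \<Rightarrow> 'i \<Rightarrow> 'i \<Rightarrow> real)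
    \<Rightarrow> 'i \<Rightarrow> 'i \<Rightarrow> 'i \<Rightarrow> real" where
  "christoffel g C a b c = LC g C (axis a 1) (axis b 1) $ c"

text \<open>With an inverse \<open>ginv\<close> of the Gram matrix the definite descriptions in \<open>LC\<close> and
  \<open>Ric\<close> have unique solutions, which makes both computable.\<close>

locale nondegenerate_form =
  fixes g ginv :: "'i::finite \<Rightarrow> 'i \<Rightarrow> real"
  assumes g_ginv: "\<And>i k. (\<Sum>j\<in>UNIV. g i j * ginv j k) = (if i = k then 1 else 0)"
    and ginv_g: "\<And>i k. (\<Sum>j\<in>UNIV. ginv i j * g j k) = (if i = k then 1 else 0)"
begin

lemma ip_representative:
  assumes lin: "linear f"
  shows "(THE w. \<forall>z. ip g w z = f z) = (\<chi> i. \<Sum>m\<in>UNIV. ginv m i * f (axis m 1))"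
proof (rule the_equality)
  let ?w = "(\<chi> i. \<Sum>m\<in>UNIV. ginv m i * f (axis m 1)) :: real^'i"
  have on_axes: "ip g ?w (axis k 1) = f (axis k 1)" for k
  proof -
    have "ip g ?w (axis k 1) = (\<Sum>i\<in>UNIV. \<Sum>m\<in>UNIV. f (axis m 1) * (ginv m i * g i k))"
      by (simp add: ip_axis_right sum_distrib_right sum_distrib_left mult_ac)
    also have "\<dots> = (\<Sum>m\<in>UNIV. f (axis m 1) * (\<Sum>i\<in>UNIV. ginv m i * g i k))"
      by (subst sum.swap) (simp add: sum_distrib_left)
    finally show ?thesis by (simp add: ginv_g sum_delta_right)
  qed
  have lin_w: "linear (ip g ?w)"
    by (rule linearI) (simp_all add: ip_lbr_bilinear)
  show "\<forall>z. ip g ?w z = f z"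
  proof
    fix z
    have "ip g ?w z = (\<Sum>m\<in>UNIV. z$m * ip g ?w (axis m 1))"
      by (rule linear_sum_axis[OF lin_w])
    also have "\<dots> = f z"
      by (simp add: on_axes linear_sum_axis[OF lin, of z])
    finally show "ip g ?w z = f z" .
  qed
next
  fix w assume w: "\<forall>z. ip g w z = f z"
  have "(\<Sum>m\<in>UNIV. ginv m i * f (axis m 1)) = w$i" for i
  proof -
    have f_axis: "f (axis m 1) = (\<Sum>a\<in>UNIV. w$a * g a m)" for m
      using w ip_axis_right[of g w m] by simp
    have "(\<Sum>m\<in>UNIV. ginv m i * f (axis m 1)) = (\<Sum>m\<in>UNIV. \<Sum>a\<in>UNIV. w$a * (g a m * ginv m i))"
      by (simp add: f_axis sum_distrib_left mult_ac)
    also have "\<dots> = (\<Sum>a\<in>UNIV. w$a * (\<Sum>m\<in>UNIV. g a m * ginv m i))"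
      by (subst sum.swap) (simp add: sum_distrib_left)
    finally show ?thesis by (simp add: g_ginv sum_delta_right)
  qed
  then show "w = (\<chi> i. \<Sum>m\<in>UNIV. ginv m i * f (axis m 1))" by (simp add: vec_eq_iff)
qed

lemma LC_eq_koszul: "LC g C x y = (\<chi> i. \<Sum>m\<in>UNIV. ginv m i * koszul g C x y (axis m 1))"
  unfolding LC_def koszul_def[symmetric] by (rule ip_representative[OF linear_koszul_3])

lemma linear_LC_left: "linear (\<lambda>x. LC g C x y)"
  by (rule linearI) (simp_all add: LC_eq_koszul vec_eq_iff linear_add[OF linear_koszul_1]
      linear_scale[OF linear_koszul_1] algebra_simps sum.distrib sum_distrib_left)

lemma linear_LC_right: "linear (LC g C x)"
  by (rule linearI) (simp_all add: LC_eq_koszul vec_eq_iff linear_add[OF linear_koszul_2]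
      linear_scale[OF linear_koszul_2] algebra_simps sum.distrib sum_distrib_left)

lemma LC_axis_left_component: "LC g C (axis a 1) v $ c = (\<Sum>b\<in>UNIV. v$b * christoffel g C a b c)"
proof -
  have "linear (\<lambda>v. LC g C (axis a 1) v $ c)"
    by (rule linearI) (simp_all add: linear_add[OF linear_LC_right] linear_scale[OF linear_LC_right])
  then show ?thesis
    unfolding christoffel_def by (rule linear_sum_axis)
qed

lemma LC_axis_right_component: "LC g C u (axis b 1) $ c = (\<Sum>a\<in>UNIV. u$a * christoffel g C a b c)"
proof -
  have "linear (\<lambda>u. LC g C u (axis b 1) $ c)"
    by (rule linearI) (simp_all add: linear_add[OF linear_LC_left] linear_scale[OF linear_LC_left])
  then show ?thesis
    unfolding christoffel_def by (rule linear_sum_axis)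
qed

lemma christoffel_eq: "christoffel g C a b c = (\<Sum>m\<in>UNIV. ginv m c *
   ((\<Sum>k\<in>UNIV. C a b k * g k m) - (\<Sum>k\<in>UNIV. C b m k * g k a) + (\<Sum>k\<in>UNIV. C m a k * g k b)) / 2)"
  by (simp add: christoffel_def LC_eq_koszul koszul_def ip_axis_right lbr_axis_axis)

lemma ricci_axis: "ricci g C (axis x 1) (axis y 1) = (\<Sum>i\<in>UNIV.
     (\<Sum>b\<in>UNIV. christoffel g C x y b * christoffel g C i b i)
   - (\<Sum>b\<in>UNIV. christoffel g C i y b * christoffel g C x b i)
   - (\<Sum>a\<in>UNIV. C i x a * christoffel g C a y i))"
  by (simp add: ricci_def curv_def LC_axis_left_component LC_axis_right_component
      lbr_axis_axis sum_axis)

lemma linear_ricci: "linear (ricci g C x)"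
proof (rule linearI)
  fix y1 y2
  show "ricci g C x (y1 + y2) = ricci g C x y1 + ricci g C x y2"
    unfolding ricci_def sum.distrib[symmetric]
    by (rule sum.cong) (simp_all add: curv_def linear_add[OF linear_LC_right])
next
  fix r y
  show "ricci g C x (r *\<^sub>R y) = r *\<^sub>R ricci g C x y"
    by (simp add: ricci_def curv_def linear_scale[OF linear_LC_right] sum_distrib_left algebra_simps)
qed

lemma Ric_component: "Ric g C x $ k = (\<Sum>m\<in>UNIV. ginv m k * ricci g C x (axis m 1))"
  unfolding Ric_def ip_representative[OF linear_ricci] by simp

end

lemma gN_self_inverse:
  assumes "e * e = 1" "e1 * e1 = 1" "e2 * e2 = 1"
  shows "nondegenerate_form (gN e e1 e2) (gN e e1 e2)"
proof -
  have "(\<Sum>j\<in>UNIV. gN e e1 e2 i j * gN e e1 e2 j k) = (if i = k then 1 else 0)" for i k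
    using assms by (cases i; cases k) (simp_all add: UNIV_B)
  then show ?thesis by unfold_locales
qed

lemma ricci_gN_axis:
  assumes "e * e = 1" "e1 * e1 = 1" "e2 * e2 = 1"
  shows "ricci (gN e e1 e2) Cn (axis V1 1) (axis U1 1) = 0"
    and "ricci (gN e e1 e2) Cn (axis V2 1) (axis U2 1) = 0"
    and "ricci (gN e e1 e2) Cn (axis E1 1) (axis E1 1) = - e * e2 / 2"
    and "ricci (gN e e1 e2) Cn (axis E2 1) (axis E2 1) = - e * e1 / 2"
  by (simp_all add: nondegenerate_form.ricci_axis[OF gN_self_inverse[OF assms]]
      nondegenerate_form.christoffel_eq[OF gN_self_inverse[OF assms]] UNIV_B Cn_def)

lemma Ric_gN_diagonal:
  assumes "e * e = 1" "e1 * e1 = 1" "e2 * e2 = 1"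
  shows "Ric (gN e e1 e2) Cn (axis V1 1) $ V1 = 0" and "Ric (gN e e1 e2) Cn (axis V2 1) $ V2 = 0"
    and "Ric (gN e e1 e2) Cn (axis E1 1) $ E1 = - e * e1 * e2 / 2"
    and "Ric (gN e e1 e2) Cn (axis E2 1) $ E2 = - e * e1 * e2 / 2"
  using ricci_gN_axis[OF assms]
  by (simp_all add: nondegenerate_form.Ric_component[OF gN_self_inverse[OF assms]] UNIV_B)

lemma nilsoliton_Cn_Ric_diagonal:
  assumes "nilsoliton g Cn"
  shows "Ric g Cn (axis V1 1) $ V1 + Ric g Cn (axis V2 1) $ V2
       = Ric g Cn (axis E1 1) $ E1 + Ric g Cn (axis E2 1) $ E2"
proof -
  obtain c D where der: "is_derivation Cn D" and ric: "\<And>x. Ric g Cn x = c *\<^sub>R x + D x"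
    using assms unfolding nilsoliton_def by blast
  have "Cn V1 V2 k = (if k = Zb then 1 else 0)" and "Cn E1 E2 k = (if k = Zb then 1 else 0)" for k
    by (cases k; simp add: Cn_def)+
  then have "lbr Cn (axis V1 1) (axis V2 1) = axis Zb 1" and "lbr Cn (axis E1 1) (axis E2 1) = axis Zb 1"
    unfolding lbr_axis_axis by (simp_all add: axis_def vec_eq_iff)
  from this[THEN derivation_axis_component[OF der]]
  have "D (axis Zb 1) $ Zb = D (axis V1 1) $ V1 + D (axis V2 1) $ V2"
    and "D (axis Zb 1) $ Zb = D (axis E1 1) $ E1 + D (axis E2 1) $ E2"
    by (simp_all add: UNIV_B Cn_def)
  then show ?thesis by (simp add: ric)
qed

theorem mainTheorem5:
  fixes \<epsilon> \<epsilon>1 \<epsilon>2 :: real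
  assumes "\<epsilon> \<in> {1, -1}" and "\<epsilon>1 \<in> {1, -1}" and "\<epsilon>2 \<in> {1, -1}"
  shows "\<not> nilsoliton (gN \<epsilon> \<epsilon>1 \<epsilon>2) Cn"
proof
  assume nil: "nilsoliton (gN \<epsilon> \<epsilon>1 \<epsilon>2) Cn"
  have signs: "\<epsilon> * \<epsilon> = 1" "\<epsilon>1 * \<epsilon>1 = 1" "\<epsilon>2 * \<epsilon>2 = 1"
    using assms by auto
  have "\<epsilon> * \<epsilon>1 * \<epsilon>2 = 0"
    using nilsoliton_Cn_Ric_diagonal[OF nil] Ric_gN_diagonal[OF signs] by simp
  with signs show False by auto
qed

end
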